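(* Let $G$ be a group of order $k\ge2$. Then for every $n\ge1$ the $(G,* )$-graded $n$-codimension of $M_k(\mathbb{C})$ (with the $G$-crossed-product grading and the transpose involution) satisfies $c^G_n=m_k(n)$. In particular $c^G_n$ depends only on $k$ and not on the group $G$.
   Context: Let $G=\{g_1=e,\dots,g_k\}$. Index rows/columns of $k\times k$ matrices by $G$, let $E_{a,b}$ be matrix units, $P_g=\sum_{h\in G}E_{h,hg}$, and $M_k(\mathbb{C})_g=\{DP_g: D\text{ diagonal}\}$ (the $G$-crossed-product grading); $*$ is transpose. $F=\mathbb{Q}\{x_{i,g},x^*_{i,g}: i\ge1,g\in G\}$ is the free algebra; $I(G,* )$ is the set of $f\in F$ vanishing under every substitution $x_{i,g}\mapsto A_{i,g}\in M_k(\mathbb{C})_g$, $x^*_{i,g}\mapsto A_{i,g}^T$. $P^G_n$ is the $\mathbb{Q}$-span of the monomials $x^{\epsilon_1}_{\sigma(1),h_1}\cdots x^{\epsilon_n}_{\sigma(n),h_n}$ with $\sigma\in S_n$, $h_1,\dots,h_n\in G$, each $\epsilon_i\in\{\text{nothing},*\}$ (a space of dimension $2^nk^nn!$), and $c^G_n=\dim_{\mathbb{Q}}P^G_n/(P^G_n\cap I(G,* ))$. A labeled graph on $G$ with $n$ edges has vertex set $G$ and $n$ directed edges labeled $1,\dots,n$, edge $i$ being an ordered pair (initial vertex, terminal vertex) in $G\times G$ (loops and multiple edges allowed). $m_k(n)$ is the number of such graphs that admit an Eulerian path starting at $e$ in the underlying undirected graph, i.e., a walk ignoring orientations that starts at $e$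 and uses every edge exactly once. *)

theory Defs
  imports Complex_Main "HOL-Algebra.Group" "HOL-Library.FuncSet" "HOL-Library.Function_Algebras"
begin

text \<open>Matrices indexed by the carrier of G (k x k, k = |G|) are functions 'a => 'a => complex;
only entries indexed by elements of the carrier are relevant.\<close>

type_synonym 'a gmat = "'a \<Rightarrow> 'a \<Rightarrow> complex"

definition gmat_mult :: "('a, 'b) monoid_scheme \<Rightarrow> 'a gmat \<Rightarrow> 'a gmat \<Rightarrow> 'a gmat" where
  "gmat_mult G M N = (\<lambda>a b. \<Sum>c\<in>carrier G. M a c * N c b)"

definition gmat_one :: "'a gmat" where
  "gmat_one = (\<lambda>a b. if a = b then 1 else 0)"

definition gmat_transpose :: "'a gmat \<Rightarrow> 'a gmat" where
  "gmat_transpose M = (\<lambda>a b. M b a)"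

text \<open>Homogeneous component of degree g of the crossed-product grading:
 matrices D P_g with D diagonal, i.e. entry (a,b) may be nonzero only if b = a g.\<close>
definition graded_comp :: "('a, 'b) monoid_scheme \<Rightarrow> 'a \<Rightarrow> 'a gmat set" where
  "graded_comp G g = {M. \<forall>a\<in>carrier G. \<forall>b\<in>carrier G. b \<noteq> a \<otimes>\<^bsub>G\<^esub> g \<longrightarrow> M a b = 0}"

text \<open>A multilinear monomial x^{eps_1}_{sigma(1),h_1} ... x^{eps_n}_{sigma(n),h_n} is the list
 of triples (sigma(j), h_j, eps_j) (True = starred variable).\<close>
definition mono_words :: "('a, 'b) monoid_scheme \<Rightarrow> nat \<Rightarrow> (nat \<times> 'a \<times> bool) list set" where
  "mono_words G n = {w. length w = n \<and> set (map fst w) = {1..n} \<and>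
                   (\<forall>x\<in>set w. fst (snd x) \<in> carrier G)}"

definition eval_mono :: "('a, 'b) monoid_scheme \<Rightarrow> (nat \<Rightarrow> 'a \<Rightarrow> 'a gmat) \<Rightarrow> (nat \<times> 'a \<times> bool) list \<Rightarrow> 'a gmat" where
  "eval_mono G A w = foldr (\<lambda>(i, g, s) M. gmat_mult G (if s then gmat_transpose (A i g) else A i g) M) w gmat_one"

text \<open>P^G_n: rational linear combinations of the monomials of mono_words G n, represented by
 their coefficient functions.\<close>
definition Pn :: "('a, 'b) monoid_scheme \<Rightarrow> nat \<Rightarrow> ((nat \<times> 'a \<times> bool) list \<Rightarrow> rat) set" where
  "Pn G n = {c. \<forall>w. c w \<noteq> 0 \<longrightarrow> w \<in> mono_words G n}"

definition Pn_Id :: "('a, 'b) monoid_scheme \<Rightarrow> nat \<Rightarrow> ((nat \<times> 'a \<times> bool) list \<Rightarrow> rat) set" where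
  "Pn_Id G n = {c \<in> Pn G n. \<forall>A. (\<forall>i g. g \<in> carrier G \<longrightarrow> A i g \<in> graded_comp G g) \<longrightarrow>
      (\<forall>a\<in>carrier G. \<forall>b\<in>carrier G.
         (\<Sum>w\<in>mono_words G n. of_rat (c w) * eval_mono G A w a b) = 0)}"

definition qscale :: "rat \<Rightarrow> ('m \<Rightarrow> rat) \<Rightarrow> ('m \<Rightarrow> rat)" where
  "qscale r f = (\<lambda>x. r * f x)"

text \<open>c^G_n = dim_Q (P^G_n / (P^G_n \<inter> I(G,*))) = dim P^G_n - dim (P^G_n \<inter> I(G,*)).\<close>
definition graded_codim :: "('a, 'b) monoid_scheme \<Rightarrow> nat \<Rightarrow> nat" where
  "graded_codim G n = vector_space.dim qscale (Pn G n) - vector_space.dim qscale (Pn_Id G n)"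

text \<open>Labeled graphs on vertex set V with edges 1..n: maps {1..n} -> V x V (initial, terminal).
 Eulerian path from v0 in the underlying undirected graph.\<close>
definition has_euler_path_from :: "(nat \<Rightarrow> 'v \<times> 'v) \<Rightarrow> nat \<Rightarrow> 'v \<Rightarrow> bool" where
  "has_euler_path_from E n v0 \<longleftrightarrow> (\<exists>es vs. distinct es \<and> set es = {1..n} \<and>
      length vs = Suc n \<and> vs ! 0 = v0 \<and>
      (\<forall>j<n. E (es ! j) = (vs ! j, vs ! Suc j) \<or> E (es ! j) = (vs ! Suc j, vs ! j)))"

definition euler_graph_count :: "'v set \<Rightarrow> 'v \<Rightarrow> nat \<Rightarrow> nat" where
  "euler_graph_count V v0 n = card {E \<in> {1..n} \<rightarrow>\<^sub>E V \<times> V. has_euler_path_from E n v0}"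

definition m_count :: "nat \<Rightarrow> nat \<Rightarrow> nat" where
  "m_count k n = euler_graph_count {0..<k} (0::nat) n"

end

(*
  Evaluate a multilinear monomial on homogeneous matrices D P_g: the letter x_{i,g} sends row a
  only to row a g, and its transpose only to row a g^-1. Hence the (a, b) entry of a monomial is
  a single product of entries along a walk starting at a, and the monomial enters only through its
  signature: the labelled graph of the edges it traverses from e, together with the endpoint.
  Substituting matrix units on the edges of a fixed graph shows that a linear combination is an
  identity exactly when its coefficients sum to zero over each signature, so c_n^G is the number
  of signatures. The endpoint is determined by the graph, since the vertices of odd degree of a
  trail are its ends, and the graphs that occur are precisely those with an Eulerian trail from e.
  Relabelling G by {0..<k} with e sent to 0 gives m_k(n).
*)

theory Submission
  imports Defs "HOL-Combinatorics.Transposition"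
begin

section \<open>Dimensions of spaces of rational coefficient functions\<close>

interpretation rat_fun: vector_space "qscale :: rat \<Rightarrow> ('m \<Rightarrow> rat) \<Rightarrow> 'm \<Rightarrow> rat"
  by unfold_locales (auto simp: qscale_def fun_eq_iff algebra_simps)

lemma qscale_apply [simp]: "qscale r f x = r * f x"
  by (simp add: qscale_def)

lemma sum_apply: "(\<Sum>a\<in>A. f a) x = (\<Sum>a\<in>A. f a x)"
  by (induction A rule: infinite_finite_induct) auto

definition supported_in :: "'m set \<Rightarrow> ('m \<Rightarrow> rat) set" where
  "supported_in M = {c. \<forall>w. c w \<noteq> 0 \<longrightarrow> w \<in> M}"

lemma Pn_eq_supported_in: "Pn G n = supported_in (mono_words G n)"
  by (simp add: Pn_def supported_in_def)

lemma rat_fun_dim_eq_card_dual_basis: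
  fixes b :: "'m \<Rightarrow> 'm \<Rightarrow> rat"
  assumes "finite I" and "b ` I \<subseteq> V"
    and dual: "\<And>i j. i \<in> I \<Longrightarrow> j \<in> I \<Longrightarrow> b i j = of_bool (i = j)"
    and expand: "\<And>c. c \<in> V \<Longrightarrow> c = (\<Sum>i\<in>I. qscale (c i) (b i))"
  shows "rat_fun.dim V = card I"
proof (rule rat_fun.dim_unique)
  have inj: "inj_on b I"
    by (rule inj_onI) (metis dual of_bool_eq_1_iff)
  show "b ` I \<subseteq> V" by fact
  show "card (b ` I) = card I"
    using inj by (rule card_image)
  show "rat_fun.independent (b ` I)"
  proof (rule rat_fun.independent_if_scalars_zero)
    show "finite (b ` I)" using \<open>finite I\<close> by simp
    fix f v assume zero: "(\<Sum>v\<in>b ` I. qscale (f v) v) = 0" and "v \<in> b ` I"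
    then obtain j where j: "j \<in> I" "v = b j" by auto
    have "0 = (\<Sum>i\<in>I. qscale (f (b i)) (b i)) j"
      using zero by (simp add: sum.reindex[OF inj])
    also have "\<dots> = f v"
      using j \<open>finite I\<close> by (simp add: sum_apply dual)
    finally show "f v = 0" by simp
  qed
  show "V \<subseteq> rat_fun.span (b ` I)"
  proof
    fix c assume "c \<in> V"
    then have "c = (\<Sum>i\<in>I. qscale (c i) (b i))" by (rule expand)
    also have "\<dots> \<in> rat_fun.span (b ` I)"
      by (intro rat_fun.span_sum rat_fun.span_scale rat_fun.span_base) auto
    finally show "c \<in> rat_fun.span (b ` I)" .
  qed
qed

lemma rat_fun_dim_supported_in:
  assumes "finite M"
  shows "rat_fun.dim (supported_in M) = card M"
proof (rule rat_fun_dim_eq_card_dual_basis[where b = "\<lambda>w x. of_bool (x = w)"])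
  show "c = (\<Sum>w\<in>M. qscale (c w) (\<lambda>x. of_bool (x = w)))" if "c \<in> supported_in M" for c
    using that \<open>finite M\<close> by (auto simp: fun_eq_iff sum_apply supported_in_def Int_insert_right)
qed (use assms in \<open>auto simp: supported_in_def\<close>)

lemma fibre_sums_zero_expansion:
  fixes f :: "'m \<Rightarrow> 'p" and r :: "'p \<Rightarrow> 'm"
  assumes "finite M" and r: "\<And>p. p \<in> f ` M \<Longrightarrow> r p \<in> M \<and> f (r p) = p"
    and "c \<in> supported_in M" and fibre_sum: "\<forall>p\<in>f ` M. (\<Sum>w\<in>{w\<in>M. f w = p}. c w) = 0"
  shows "c = (\<Sum>w\<in>M - r ` f ` M. qscale (c w) (\<lambda>x. of_bool (x = w) - of_bool (x = r (f w))))"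
proof
  fix x
  let ?R = "r ` f ` M"
  show "c x = (\<Sum>w\<in>M - ?R. qscale (c w) (\<lambda>x. of_bool (x = w) - of_bool (x = r (f w)))) x"
  proof (cases "x \<in> ?R")
    case False
    then have "x \<noteq> r (f w)" if "w \<in> M" for w
      using that by blast
    then have "(\<Sum>w\<in>M - ?R. qscale (c w) (\<lambda>x. of_bool (x = w) - of_bool (x = r (f w)))) x
        = (\<Sum>w\<in>M - ?R. if w = x then c w else 0)"
      unfolding sum_apply by (intro sum.cong) auto
    then show ?thesis
      using \<open>c \<in> supported_in M\<close> False \<open>finite M\<close> by (simp add: supported_in_def) blast
  next
    case True
    then obtain p where p: "p \<in> f ` M" "x = r p" by blast
    have "(of_bool (x = w) - of_bool (x = r (f w)) :: rat) = - of_bool (f w = p)" if "w \<in> M - ?R" for w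
    proof -
      have "x \<noteq> w" and "x = r (f w) \<longleftrightarrow> f w = p"
        using True p r that by (blast, metis DiffD1 image_eqI)
      then show ?thesis by simp
    qed
    then have "(\<Sum>w\<in>M - ?R. qscale (c w) (\<lambda>x. of_bool (x = w) - of_bool (x = r (f w)))) x
        = - (\<Sum>w\<in>M - ?R. c w * of_bool (f w = p))"
      unfolding sum_apply by (simp add: sum_negf)
    also have "\<dots> = - (\<Sum>w\<in>{w\<in>M - ?R. f w = p}. c w)"
      using \<open>finite M\<close> by (simp add: Int_def)
    also have "\<dots> = c x"
    proof -
      have "{w\<in>M. f w = p} = insert x {w\<in>M - ?R. f w = p}" and "x \<notin> {w\<in>M - ?R. f w = p}"
        using p r by auto
      then have "(\<Sum>w\<in>{w\<in>M. f w = p}. c w) = c x + (\<Sum>w\<in>{w\<in>M - ?R. f w = p}. c w)"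
        using \<open>finite M\<close> by simp
      moreover have "(\<Sum>w\<in>{w\<in>M. f w = p}. c w) = 0"
        using fibre_sum p(1) by blast
      ultimately show ?thesis by simp
    qed
    finally show ?thesis ..
  qed
qed

lemma rat_fun_dim_fibre_sums_zero:
  fixes f :: "'m \<Rightarrow> 'p"
  assumes "finite M"
  shows "rat_fun.dim {c \<in> supported_in M. \<forall>p\<in>f ` M. (\<Sum>w\<in>{w\<in>M. f w = p}. c w) = 0}
       = card M - card (f ` M)" (is "rat_fun.dim ?V = _")
proof -
  define r where "r = inv_into M f"
  define R where "R = r ` f ` M"
  have r: "r p \<in> M \<and> f (r p) = p" if "p \<in> f ` M" for p
    using that by (simp add: r_def inv_into_into f_inv_into_f)
  have "R \<subseteq> M" and card_R: "card R = card (f ` M)"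
    using r by (auto simp: R_def r_def card_image inj_on_inv_into)
  have r_R: "r (f w) \<in> R" if "w \<in> M" for w
    using that by (simp add: R_def)
  \<comment> \<open>basis: the differences between a non-representative and the representative of its fibre\<close>
  define b :: "'m \<Rightarrow> 'm \<Rightarrow> rat" where "b w x = of_bool (x = w) - of_bool (x = r (f w))" for w x
  have "rat_fun.dim ?V = card (M - R)"
  proof (rule rat_fun_dim_eq_card_dual_basis[where b = b])
    show "finite (M - R)" using \<open>finite M\<close> by simp
    show "b ` (M - R) \<subseteq> ?V"
    proof (intro image_subsetI CollectI conjI ballI)
      fix w assume w: "w \<in> M - R"
      then show "b w \<in> supported_in M"
        using r_R \<open>R \<subseteq> M\<close> by (auto simp: b_def supported_in_def)
      fix p assume "p \<in> f ` M"
      have "r (f w) \<in> M" "f (r (f w)) = f w"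
        using w r by auto
      then show "(\<Sum>x\<in>{x\<in>M. f x = p}. b w x) = 0"
        using w \<open>finite M\<close> by (simp add: b_def sum_subtractf Int_def Collect_conv_if)
    qed
    show "b i j = of_bool (i = j)" if "i \<in> M - R" "j \<in> M - R" for i j
      using that r_R by (auto simp: b_def) metis
    show "c = (\<Sum>w\<in>M - R. qscale (c w) (b w))" if "c \<in> ?V" for c
      using fibre_sums_zero_expansion[OF \<open>finite M\<close> r] that
      by (simp add: R_def b_def[abs_def])
  qed
  then show ?thesis
    using card_Diff_subset[OF finite_subset[OF \<open>R \<subseteq> M\<close> \<open>finite M\<close>] \<open>R \<subseteq> M\<close>] card_R by simp
qed

lemma sum_eq_0_if_fibre_sums_eq_0:
  fixes c :: "'m \<Rightarrow> rat" and F :: "'p \<Rightarrow> 'f :: field_char_0"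
  assumes "finite M" and "\<forall>p\<in>f ` M. (\<Sum>w\<in>{w\<in>M. f w = p}. c w) = 0"
  shows "(\<Sum>w\<in>M. of_rat (c w) * F (f w)) = 0"
proof -
  have "(\<Sum>w\<in>M. of_rat (c w) * F (f w)) = (\<Sum>p\<in>f ` M. \<Sum>w\<in>{w\<in>M. f w = p}. of_rat (c w) * F (f w))"
    by (rule sum.image_gen[OF \<open>finite M\<close>])
  also have "\<dots> = (\<Sum>p\<in>f ` M. F p * of_rat (\<Sum>w\<in>{w\<in>M. f w = p}. c w))"
    by (simp add: of_rat_sum sum_distrib_left mult.commute)
  also have "\<dots> = 0"
    using assms(2) by (intro sum.neutral) auto
  finally show ?thesis .
qed

section \<open>Eulerian trails\<close>

definition euler_trail :: "(nat \<Rightarrow> 'v \<times> 'v) \<Rightarrow> nat \<Rightarrow> 'v \<Rightarrow> nat list \<Rightarrow> 'v list \<Rightarrow> bool" where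
  "euler_trail E n v0 es vs \<longleftrightarrow> distinct es \<and> set es = {1..n} \<and> length vs = Suc n \<and> vs ! 0 = v0 \<and>
      (\<forall>j<n. E (es ! j) = (vs ! j, vs ! Suc j) \<or> E (es ! j) = (vs ! Suc j, vs ! j))"

lemma has_euler_path_from_iff: "has_euler_path_from E n v0 \<longleftrightarrow> (\<exists>es vs. euler_trail E n v0 es vs)"
  by (simp add: has_euler_path_from_def euler_trail_def)

lemma euler_trail_length: "euler_trail E n v0 es vs \<Longrightarrow> length es = n"
  by (metis card_atLeastAtMost diff_Suc_1 distinct_card euler_trail_def)

definition vertex_degree :: "(nat \<Rightarrow> 'v \<times> 'v) \<Rightarrow> nat \<Rightarrow> 'v \<Rightarrow> nat" where
  "vertex_degree E n v = (\<Sum>i\<in>{1..n}. of_bool (fst (E i) = v) + of_bool (snd (E i) = v))"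

lemma euler_trail_degree_parity:
  assumes trail: "euler_trail E n v0 es vs"
  shows "even (vertex_degree E n v + of_bool (v = v0) + of_bool (v = vs ! n))"
proof -
  define d :: "nat \<Rightarrow> nat" where "d i = of_bool (fst (E i) = v) + of_bool (snd (E i) = v)" for i
  have d_step: "d (es ! j) = of_bool (v = vs ! j) + of_bool (v = vs ! Suc j)" if "j < n" for j
    using trail that by (auto simp: euler_trail_def d_def)
  have "even ((\<Sum>j<m. d (es ! j)) + of_bool (v = v0) + of_bool (v = vs ! m))" if "m \<le> n" for m
    using that
  proof (induction m)
    case 0
    then show ?case using trail by (simp add: euler_trail_def)
  next
    case (Suc m)
    have "(\<Sum>j<Suc m. d (es ! j)) + of_bool (v = v0) + of_bool (v = vs ! Suc m)
        = ((\<Sum>j<m. d (es ! j)) + of_bool (v = v0) + of_bool (v = vs ! m)) + 2 * of_bool (v = vs ! Suc m)"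
      using d_step[of m] Suc.prems by simp
    then show ?case
      using Suc.IH Suc.prems by (metis Suc_leD dvd_add dvd_triv_left)
  qed
  moreover have "(\<Sum>j<n. d (es ! j)) = vertex_degree E n v"
  proof -
    have "bij_betw ((!) es) {..<n} {1..n}"
      using trail euler_trail_length[OF trail] by (intro bij_betw_nth) (simp_all add: euler_trail_def)
    then show ?thesis
      unfolding vertex_degree_def d_def by (rule sum.reindex_bij_betw)
  qed
  ultimately show ?thesis
    by (metis order_refl)
qed

lemma euler_trail_last_unique:
  assumes "euler_trail E n v0 es vs" "euler_trail E n v0 es' vs'"
  shows "vs ! n = vs' ! n"
proof (rule ccontr)
  assume "vs ! n \<noteq> vs' ! n"
  moreover have "even (vertex_degree E n (vs ! n) + of_bool (vs ! n = v0) + of_bool (vs ! n = vs' ! n))"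
    using euler_trail_degree_parity[OF assms(2)] .
  moreover have "even (vertex_degree E n (vs ! n) + of_bool (vs ! n = v0) + 1)"
    using euler_trail_degree_parity[OF assms(1), of "vs ! n"] by simp
  ultimately show False
    by simp
qed

definition relabel_graph :: "nat \<Rightarrow> ('v \<Rightarrow> 'u) \<Rightarrow> (nat \<Rightarrow> 'v \<times> 'v) \<Rightarrow> nat \<Rightarrow> 'u \<times> 'u" where
  "relabel_graph n f E = (\<lambda>i\<in>{1..n}. map_prod f f (E i))"

lemma euler_trail_relabel:
  assumes "euler_trail E n v0 es vs"
  shows "euler_trail (relabel_graph n f E) n (f v0) es (map f vs)"
proof -
  have "es ! j \<in> {1..n}" if "j < n" for j
    using assms euler_trail_length[OF assms] that by (metis euler_trail_def nth_mem)
  then show ?thesis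
    using assms by (auto simp: euler_trail_def relabel_graph_def)
qed

lemma relabel_graph_euler:
  assumes "f ` V \<subseteq> V'" and "E \<in> {1..n} \<rightarrow>\<^sub>E V \<times> V" and "has_euler_path_from E n v0"
  shows "relabel_graph n f E \<in> {1..n} \<rightarrow>\<^sub>E V' \<times> V'" and "has_euler_path_from (relabel_graph n f E) n (f v0)"
proof -
  show "relabel_graph n f E \<in> {1..n} \<rightarrow>\<^sub>E V' \<times> V'"
    unfolding relabel_graph_def restrict_PiE_iff
    using assms(1) PiE_mem[OF assms(2)] by (auto simp: mem_Times_iff)
  show "has_euler_path_from (relabel_graph n f E) n (f v0)"
    using assms(3) euler_trail_relabel by (metis has_euler_path_from_iff)
qed

lemma relabel_graph_inverse:
  assumes "\<And>v. v \<in> V \<Longrightarrow> g (f v) = v" and "E \<in> {1..n} \<rightarrow>\<^sub>E V \<times> V"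
  shows "relabel_graph n g (relabel_graph n f E) = E"
proof
  fix i
  show "relabel_graph n g (relabel_graph n f E) i = E i"
  proof (cases "i \<in> {1..n}")
    case True
    obtain u v where "E i = (u, v)" "u \<in> V" "v \<in> V"
      using PiE_mem[OF assms(2) True] by auto
    then show ?thesis using True assms(1) by (simp add: relabel_graph_def)
  next
    case False
    then show ?thesis using PiE_arb[OF assms(2) False] by (auto simp: relabel_graph_def)
  qed
qed

lemma euler_graph_count_bij_betw:
  assumes "bij_betw f V V'" and "v0 \<in> V"
  shows "euler_graph_count V v0 n = euler_graph_count V' (f v0) n"
proof -
  define g where "g = inv_into V f"
  have "bij_betw (relabel_graph n f)
      {E \<in> {1..n} \<rightarrow>\<^sub>E V \<times> V. has_euler_path_from E n v0}
      {E \<in> {1..n} \<rightarrow>\<^sub>E V' \<times> V'. has_euler_path_from E n (f v0)}"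
  proof (rule bij_betw_byWitness[where f' = "relabel_graph n g"])
    have gf: "g (f v) = v" if "v \<in> V" for v
      using assms(1) that by (simp add: g_def bij_betw_inv_into_left)
    have fg: "f (g v) = v" if "v \<in> V'" for v
      using assms(1) that by (simp add: g_def bij_betw_inv_into_right)
    have "f ` V \<subseteq> V'" "g ` V' \<subseteq> V" "g (f v0) = v0"
      using assms bij_betw_inv_into[OF assms(1)] gf by (auto simp: g_def bij_betw_def)
    then show "relabel_graph n f ` {E \<in> {1..n} \<rightarrow>\<^sub>E V \<times> V. has_euler_path_from E n v0}
        \<subseteq> {E \<in> {1..n} \<rightarrow>\<^sub>E V' \<times> V'. has_euler_path_from E n (f v0)}"
      and "relabel_graph n g ` {E \<in> {1..n} \<rightarrow>\<^sub>E V' \<times> V'. has_euler_path_from E n (f v0)}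
        \<subseteq> {E \<in> {1..n} \<rightarrow>\<^sub>E V \<times> V. has_euler_path_from E n v0}"
      using relabel_graph_euler[of f V V' _ n v0] relabel_graph_euler[of g V' V _ n "f v0"]
      by (intro image_subsetI CollectI conjI; simp)+
    show "\<forall>E\<in>{E \<in> {1..n} \<rightarrow>\<^sub>E V \<times> V. has_euler_path_from E n v0}. relabel_graph n g (relabel_graph n f E) = E"
      using relabel_graph_inverse[of V g f] gf by blast
    show "\<forall>E\<in>{E \<in> {1..n} \<rightarrow>\<^sub>E V' \<times> V'. has_euler_path_from E n (f v0)}. relabel_graph n f (relabel_graph n g E) = E"
      using relabel_graph_inverse[of V' f g] fg by blast
  qed
  then show ?thesis
    unfolding euler_graph_count_def by (rule bij_betw_same_card)
qed

lemma ex_bij_betw_finite_nat_zero: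
  assumes "finite V" "v0 \<in> V"
  obtains h where "bij_betw h V {0..<card V}" "h v0 = 0"
proof -
  obtain h where h: "bij_betw h V {0..<card V}"
    using ex_bij_betw_finite_nat[OF assms(1)] by blast
  have "h v0 \<in> {0..<card V}" "0 \<in> {0..<card V}"
    using h assms by (auto simp: bij_betw_def card_gt_0_iff)
  then have "bij_betw (transpose (h v0) 0 \<circ> h) V {0..<card V}"
    using h by (auto intro: bij_betw_trans)
  then show ?thesis
    using that by simp
qed

section \<open>Walks traced by monomials\<close>

definition word_step :: "('a, 'b) monoid_scheme \<Rightarrow> 'a \<Rightarrow> nat \<times> 'a \<times> bool \<Rightarrow> 'a" where
  "word_step G a x = (if snd (snd x) then a \<otimes>\<^bsub>G\<^esub> inv\<^bsub>G\<^esub> fst (snd x) else a \<otimes>\<^bsub>G\<^esub> fst (snd x))"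

definition word_edge :: "('a, 'b) monoid_scheme \<Rightarrow> 'a \<Rightarrow> nat \<times> 'a \<times> bool \<Rightarrow> 'a \<times> 'a" where
  "word_edge G a x = (if snd (snd x) then (word_step G a x, a) else (a, word_step G a x))"

fun word_walk :: "('a, 'b) monoid_scheme \<Rightarrow> 'a \<Rightarrow> (nat \<times> 'a \<times> bool) list \<Rightarrow> 'a list" where
  "word_walk G a [] = [a]"
| "word_walk G a (x # w) = a # word_walk G (word_step G a x) w"

fun word_end :: "('a, 'b) monoid_scheme \<Rightarrow> 'a \<Rightarrow> (nat \<times> 'a \<times> bool) list \<Rightarrow> 'a" where
  "word_end G a [] = a"
| "word_end G a (x # w) = word_end G (word_step G a x) w"

fun word_graph :: "('a, 'b) monoid_scheme \<Rightarrow> 'a \<Rightarrow> (nat \<times> 'a \<times> bool) list \<Rightarrow> nat \<Rightarrow> 'a \<times> 'a" where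
  "word_graph G a [] = (\<lambda>_. undefined)"
| "word_graph G a (x # w) = (word_graph G (word_step G a x) w)(fst x := word_edge G a x)"

definition wf_word :: "('a, 'b) monoid_scheme \<Rightarrow> (nat \<times> 'a \<times> bool) list \<Rightarrow> bool" where
  "wf_word G w \<longleftrightarrow> distinct (map fst w) \<and> (\<forall>x\<in>set w. fst (snd x) \<in> carrier G)"

lemma wf_word_Cons [simp]:
  "wf_word G (x # w) \<longleftrightarrow> fst x \<notin> fst ` set w \<and> fst (snd x) \<in> carrier G \<and> wf_word G w"
  by (auto simp: wf_word_def)

lemma word_edge_ends: "word_edge G a x = (a, word_step G a x) \<or> word_edge G a x = (word_step G a x, a)"
  by (simp add: word_edge_def)

lemma word_graph_extensional: "word_graph G a w \<in> extensional (fst ` set w)"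
  by (induction w arbitrary: a) (auto simp: extensional_def)

lemma word_walk_length [simp]: "length (word_walk G a w) = Suc (length w)"
  by (induction w arbitrary: a) auto

lemma word_walk_nth_0 [simp]: "word_walk G a w ! 0 = a"
  by (cases w) auto

lemma word_walk_nth_Suc:
  "j < length w \<Longrightarrow> word_walk G a w ! Suc j = word_step G (word_walk G a w ! j) (w ! j)"
  by (induction w arbitrary: a j) (auto simp: nth_Cons split: nat.split)

lemma word_walk_nth_length: "word_walk G a w ! length w = word_end G a w"
  by (induction w arbitrary: a) auto

lemma word_walk_unique:
  assumes "length vs = Suc (length w)" "vs ! 0 = a"
    and "\<And>j. j < length w \<Longrightarrow> vs ! Suc j = word_step G (vs ! j) (w ! j)"
  shows "word_walk G a w = vs"
  using assms
proof (induction w arbitrary: a vs)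
  case Nil
  then show ?case by (cases vs) auto
next
  case (Cons x w)
  then obtain vs' where vs: "vs = a # vs'" by (cases vs) auto
  have "word_walk G (word_step G a x) w = vs'"
  proof (rule Cons.IH)
    show "length vs' = Suc (length w)" using Cons.prems(1) vs by simp
    show "vs' ! 0 = word_step G a x" using Cons.prems(3)[of 0] vs by simp
    show "vs' ! Suc j = word_step G (vs' ! j) (w ! j)" if "j < length w" for j
      using Cons.prems(3)[of "Suc j"] that vs by simp
  qed
  then show ?case using vs by simp
qed

lemma word_graph_nth:
  "distinct (map fst w) \<Longrightarrow> j < length w \<Longrightarrow>
    word_graph G a w (fst (w ! j)) = word_edge G (word_walk G a w ! j) (w ! j)"
proof (induction w arbitrary: a j)
  case Nil
  then show ?case by simp
next
  case (Cons x w)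
  show ?case
  proof (cases j)
    case (Suc j')
    then have "w ! j' \<in> set w"
      using Cons.prems(2) by simp
    then have "fst (w ! j') \<noteq> fst x"
      using Cons.prems(1) by (auto simp: image_iff)
    then show ?thesis using Cons Suc by simp
  qed simp
qed

lemma mono_wordsD:
  assumes "w \<in> mono_words G n"
  shows "wf_word G w" and "fst ` set w = {1..n}" and "length w = n"
proof -
  have "length w = n" and fst_w: "set (map fst w) = {1..n}" and "\<forall>x\<in>set w. fst (snd x) \<in> carrier G"
    using assms by (auto simp: mono_words_def)
  moreover have "distinct (map fst w)"
    using \<open>length w = n\<close> fst_w by (intro card_distinct) simp
  ultimately show "wf_word G w" "fst ` set w = {1..n}" "length w = n"
    by (simp_all add: wf_word_def)
qed

lemma finite_mono_words:
  assumes "finite (carrier G)"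
  shows "finite (mono_words G n)"
proof (rule finite_subset)
  show "mono_words G n \<subseteq> {w. set w \<subseteq> {1..n} \<times> carrier G \<times> UNIV \<and> length w = n}"
    by (force simp: mono_words_def)
  show "finite {w. set w \<subseteq> {1..n} \<times> carrier G \<times> (UNIV :: bool set) \<and> length w = n}"
    using assms by (intro finite_lists_length_eq) auto
qed

definition trail_word ::
    "('a, 'b) monoid_scheme \<Rightarrow> (nat \<Rightarrow> 'a \<times> 'a) \<Rightarrow> nat list \<Rightarrow> 'a list \<Rightarrow> (nat \<times> 'a \<times> bool) list" where
  "trail_word G E es vs = map (\<lambda>j. (es ! j, inv\<^bsub>G\<^esub> fst (E (es ! j)) \<otimes>\<^bsub>G\<^esub> snd (E (es ! j)),
      E (es ! j) \<noteq> (vs ! j, vs ! Suc j))) [0..<length es]"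

context group
begin

lemma word_step_closed: "a \<in> carrier G \<Longrightarrow> fst (snd x) \<in> carrier G \<Longrightarrow> word_step G a x \<in> carrier G"
  by (simp add: word_step_def)

lemma word_edge_closed:
  "a \<in> carrier G \<Longrightarrow> fst (snd x) \<in> carrier G \<Longrightarrow> word_edge G a x \<in> carrier G \<times> carrier G"
  by (simp add: word_edge_def word_step_closed)

lemma word_edge_label:
  assumes "a \<in> carrier G" "fst (snd x) \<in> carrier G"
  shows "inv fst (word_edge G a x) \<otimes> snd (word_edge G a x) = fst (snd x)"
proof (cases "snd (snd x)")
  case True
  then show ?thesis using assms by (simp add: word_edge_def word_step_def inv_mult_group m_assoc)
next
  case False
  then show ?thesis using assms by (simp add: word_edge_def word_step_def flip: m_assoc)
qed

lemma word_graph_closed: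
  "wf_word G w \<Longrightarrow> a \<in> carrier G \<Longrightarrow> i \<in> fst ` set w \<Longrightarrow> word_graph G a w i \<in> carrier G \<times> carrier G"
proof (induction w arbitrary: a)
  case (Cons x w)
  then show ?case by (cases "i = fst x") (simp_all add: word_edge_closed word_step_closed)
qed simp

lemma word_end_closed: "wf_word G w \<Longrightarrow> a \<in> carrier G \<Longrightarrow> word_end G a w \<in> carrier G"
  by (induction w arbitrary: a) (auto simp: word_step_closed)

lemma word_step_translate:
  "a \<in> carrier G \<Longrightarrow> b \<in> carrier G \<Longrightarrow> fst (snd x) \<in> carrier G \<Longrightarrow>
    word_step G (a \<otimes> b) x = a \<otimes> word_step G b x"
  by (simp add: word_step_def m_assoc)

lemma word_end_translate:
  "wf_word G w \<Longrightarrow> a \<in> carrier G \<Longrightarrow> b \<in> carrier G \<Longrightarrow> word_end G (a \<otimes> b) w = a \<otimes> word_end G b w"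
  by (induction w arbitrary: b) (auto simp: word_step_translate word_step_closed)

lemma word_graph_translate:
  "wf_word G w \<Longrightarrow> a \<in> carrier G \<Longrightarrow> b \<in> carrier G \<Longrightarrow> i \<in> fst ` set w \<Longrightarrow>
    word_graph G (a \<otimes> b) w i = map_prod ((\<otimes>) a) ((\<otimes>) a) (word_graph G b w i)"
proof (induction w arbitrary: b)
  case (Cons x w)
  then show ?case
    by (cases "i = fst x") (simp_all add: word_step_translate word_step_closed word_edge_def)
qed simp

lemma word_letter_forward:
  assumes "u \<in> carrier G" "v \<in> carrier G"
  shows "word_step G u (i, inv u \<otimes> v, False) = v" "word_edge G u (i, inv u \<otimes> v, False) = (u, v)"
  using assms by (simp_all add: word_edge_def word_step_def flip: m_assoc)

lemma word_letter_backward: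
  assumes "u \<in> carrier G" "v \<in> carrier G"
  shows "word_step G v (i, inv u \<otimes> v, True) = u" "word_edge G v (i, inv u \<otimes> v, True) = (u, v)"
  using assms by (simp_all add: word_edge_def word_step_def inv_mult_group m_assoc) (simp_all flip: m_assoc)

lemma mono_word_euler_trail:
  assumes "w \<in> mono_words G n"
  shows "euler_trail (word_graph G a w) n a (map fst w) (word_walk G a w)"
proof -
  have w: "distinct (map fst w)" "fst ` set w = {1..n}" "length w = n"
    using mono_wordsD[OF assms] by (auto simp: wf_word_def)
  show ?thesis
    unfolding euler_trail_def
  proof (intro conjI allI impI)
    fix j assume "j < n"
    then have "word_graph G a w (map fst w ! j) = word_edge G (word_walk G a w ! j) (w ! j)"
      and "word_walk G a w ! Suc j = word_step G (word_walk G a w ! j) (w ! j)"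
      using w by (simp_all add: word_graph_nth word_walk_nth_Suc)
    then show "word_graph G a w (map fst w ! j) = (word_walk G a w ! j, word_walk G a w ! Suc j)
        \<or> word_graph G a w (map fst w ! j) = (word_walk G a w ! Suc j, word_walk G a w ! j)"
      using word_edge_ends[of G "word_walk G a w ! j" "w ! j"] by simp
  qed (use w in simp_all)
qed

lemma word_end_eq_if_word_graph_eq:
  assumes "w1 \<in> mono_words G n" "w2 \<in> mono_words G n" "word_graph G \<one> w1 = word_graph G \<one> w2"
  shows "word_end G \<one> w1 = word_end G \<one> w2"
proof -
  have "euler_trail (word_graph G \<one> w2) n \<one> (map fst w1) (word_walk G \<one> w1)"
    using mono_word_euler_trail[OF assms(1), of \<one>] assms(3) by simp
  then have "word_walk G \<one> w1 ! n = word_walk G \<one> w2 ! n"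
    using mono_word_euler_trail[OF assms(2), of \<one>] by (rule euler_trail_last_unique)
  then show ?thesis
    using mono_wordsD(3)[OF assms(1)] mono_wordsD(3)[OF assms(2)]
      word_walk_nth_length[of G \<one> w1] word_walk_nth_length[of G \<one> w2] by simp
qed

lemma trail_word_letter:
  assumes trail: "euler_trail E n a es vs" and "j < n" and "E (es ! j) \<in> carrier G \<times> carrier G"
  shows "vs ! Suc j = word_step G (vs ! j) (trail_word G E es vs ! j)"
    and "E (es ! j) = word_edge G (vs ! j) (trail_word G E es vs ! j)"
proof -
  have j: "j < length es"
    using assms(2) euler_trail_length[OF trail] by simp
  have "vs ! Suc j = word_step G (vs ! j) (trail_word G E es vs ! j)
      \<and> E (es ! j) = word_edge G (vs ! j) (trail_word G E es vs ! j)"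
  proof (cases "E (es ! j) = (vs ! j, vs ! Suc j)")
    case True
    then show ?thesis
      using assms(3) j word_letter_forward[of "vs ! j" "vs ! Suc j"] by (simp add: trail_word_def)
  next
    case False
    then have "trail_word G E es vs ! j = (es ! j, inv fst (E (es ! j)) \<otimes> snd (E (es ! j)), True)"
      using j by (simp add: trail_word_def)
    moreover have "E (es ! j) = (vs ! Suc j, vs ! j)"
      using False trail assms(2) by (auto simp: euler_trail_def)
    ultimately show ?thesis
      using assms(3) word_letter_backward[of "vs ! Suc j" "vs ! j"] by simp
  qed
  then show "vs ! Suc j = word_step G (vs ! j) (trail_word G E es vs ! j)"
    and "E (es ! j) = word_edge G (vs ! j) (trail_word G E es vs ! j)"
    by simp_all
qed

lemma euler_trail_word:
  assumes E: "E \<in> {1..n} \<rightarrow>\<^sub>E carrier G \<times> carrier G" and trail: "euler_trail E n a es vs"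
  obtains w where "w \<in> mono_words G n" and "word_graph G a w = E"
proof
  define w where "w = trail_word G E es vs"
  have es: "length es = n" "distinct es" "set es = {1..n}"
    using trail euler_trail_length[OF trail] by (auto simp: euler_trail_def)
  have E_carrier: "E (es ! j) \<in> carrier G \<times> carrier G" if "j < n" for j
    using PiE_mem[OF E] es that by (metis nth_mem)
  have "length w = n" and fst_w: "map fst w = es"
    using es by (auto simp: w_def trail_word_def intro: nth_equalityI)
  have walk: "word_walk G a w = vs"
    using trail trail_word_letter(1)[OF trail _ E_carrier] \<open>length w = n\<close>
    by (intro word_walk_unique) (auto simp: euler_trail_def w_def)
  have "\<forall>x\<in>set w. fst (snd x) \<in> carrier G"
    using E_carrier es(1) by (auto simp: w_def trail_word_def mem_Times_iff)
  then show "w \<in> mono_words G n"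
    using \<open>length w = n\<close> es(3) fst_w by (simp add: mono_words_def flip: set_map)
  show "word_graph G a w = E"
  proof (rule extensionalityI)
    show "word_graph G a w \<in> extensional {1..n}"
      using word_graph_extensional[of G a w] fst_w es by (metis set_map)
    show "E \<in> extensional {1..n}"
      using E by (simp add: PiE_def)
    fix i assume "i \<in> {1..n}"
    then obtain j where j: "j < n" "i = es ! j"
      using es by (metis in_set_conv_nth)
    then have "fst (w ! j) = i"
      using fst_w \<open>length w = n\<close> by (metis nth_map)
    then have "word_graph G a w i = word_edge G (vs ! j) (w ! j)"
      using word_graph_nth[of w j G a] walk fst_w es(2) j(1) \<open>length w = n\<close> by simp
    then show "word_graph G a w i = E i"
      using trail_word_letter(2)[OF trail j(1) E_carrier[OF j(1)]] j(2) by (simp add: w_def)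
  qed
qed

lemma word_graph_image:
  "word_graph G \<one> ` mono_words G n = {E \<in> {1..n} \<rightarrow>\<^sub>E carrier G \<times> carrier G. has_euler_path_from E n \<one>}"
proof (intro equalityI subsetI)
  fix E assume "E \<in> word_graph G \<one> ` mono_words G n"
  then obtain w where w: "w \<in> mono_words G n" "E = word_graph G \<one> w" by blast
  have "E \<in> {1..n} \<rightarrow>\<^sub>E carrier G \<times> carrier G"
    using w word_graph_extensional[of G \<one> w] word_graph_closed[OF mono_wordsD(1)[OF w(1)] one_closed]
      mono_wordsD(2)[OF w(1)] by (auto simp: PiE_def)
  moreover have "has_euler_path_from E n \<one>"
    using mono_word_euler_trail[OF w(1)] w(2) by (auto simp: has_euler_path_from_iff)
  ultimately show "E \<in> {E \<in> {1..n} \<rightarrow>\<^sub>E carrier G \<times> carrier G. has_euler_path_from E n \<one>}"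
    by blast
next
  fix E assume "E \<in> {E \<in> {1..n} \<rightarrow>\<^sub>E carrier G \<times> carrier G. has_euler_path_from E n \<one>}"
  then obtain es vs where "E \<in> {1..n} \<rightarrow>\<^sub>E carrier G \<times> carrier G" "euler_trail E n \<one> es vs"
    by (auto simp: has_euler_path_from_iff)
  then obtain w where "w \<in> mono_words G n" "word_graph G \<one> w = E"
    by (rule euler_trail_word)
  then show "E \<in> word_graph G \<one> ` mono_words G n"
    by blast
qed

end

section \<open>Evaluation of monomials on graded matrices\<close>

text \<open>An edge (u, u g) of a walk was traversed by a letter of degree g = u^-1 (u g).\<close>

definition edge_weight :: "('a, 'b) monoid_scheme \<Rightarrow> (nat \<Rightarrow> 'a \<Rightarrow> 'a gmat) \<Rightarrow> nat \<Rightarrow> 'a \<times> 'a \<Rightarrow> complex" where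
  "edge_weight G A i e = A i (inv\<^bsub>G\<^esub> fst e \<otimes>\<^bsub>G\<^esub> snd e) (fst e) (snd e)"

definition letter_matrix :: "(nat \<Rightarrow> 'a \<Rightarrow> 'a gmat) \<Rightarrow> nat \<times> 'a \<times> bool \<Rightarrow> 'a gmat" where
  "letter_matrix A x = (if snd (snd x) then gmat_transpose (A (fst x) (fst (snd x))) else A (fst x) (fst (snd x)))"

lemma eval_mono_Cons: "eval_mono G A (x # w) = gmat_mult G (letter_matrix A x) (eval_mono G A w)"
  by (cases x) (simp add: eval_mono_def letter_matrix_def)

definition word_signature :: "('a, 'b) monoid_scheme \<Rightarrow> (nat \<times> 'a \<times> bool) list \<Rightarrow> (nat \<Rightarrow> 'a \<times> 'a) \<times> 'a" where
  "word_signature G w = (word_graph G \<one>\<^bsub>G\<^esub> w, word_end G \<one>\<^bsub>G\<^esub> w)"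

text \<open>The (a, b) entry of a monomial as a function of its signature; starting the walk at a
  instead of the identity translates every vertex by a.\<close>

definition signature_eval ::
    "('a, 'b) monoid_scheme \<Rightarrow> nat \<Rightarrow> (nat \<Rightarrow> 'a \<Rightarrow> 'a gmat) \<Rightarrow> 'a \<Rightarrow> 'a \<Rightarrow> (nat \<Rightarrow> 'a \<times> 'a) \<times> 'a \<Rightarrow> complex" where
  "signature_eval G n A a b \<sigma> = (if b = a \<otimes>\<^bsub>G\<^esub> snd \<sigma>
     then \<Prod>i\<in>{1..n}. edge_weight G A i (map_prod ((\<otimes>\<^bsub>G\<^esub>) a) ((\<otimes>\<^bsub>G\<^esub>) a) (fst \<sigma> i)) else 0)"

lemma prod_of_bool: "finite I \<Longrightarrow> (\<Prod>i\<in>I. of_bool (P i)) = (of_bool (\<forall>i\<in>I. P i) :: 'r :: comm_semiring_1)"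
  by (induction I rule: finite_induct) auto

context group
begin

lemma letter_matrix_entry:
  assumes "\<And>i g. g \<in> carrier G \<Longrightarrow> A i g \<in> graded_comp G g" "fst (snd x) \<in> carrier G"
    and "a \<in> carrier G" "c \<in> carrier G"
  shows "letter_matrix A x a c = (if c = word_step G a x
      then A (fst x) (fst (snd x)) (fst (word_edge G a x)) (snd (word_edge G a x)) else 0)"
proof (cases "snd (snd x)")
  case True
  have "a = c \<otimes> fst (snd x) \<longleftrightarrow> c = a \<otimes> inv fst (snd x)"
    using assms(2-4) by (metis inv_solve_right)
  then show ?thesis
    using True assms by (auto simp: letter_matrix_def graded_comp_def gmat_transpose_def word_edge_def word_step_def)
next
  case False
  then show ?thesis
    using assms by (auto simp: letter_matrix_def graded_comp_def word_edge_def word_step_def)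
qed

lemma eval_mono_eq_edge_product:
  assumes graded: "\<And>i g. g \<in> carrier G \<Longrightarrow> A i g \<in> graded_comp G g" and "finite (carrier G)"
  shows "wf_word G w \<Longrightarrow> a \<in> carrier G \<Longrightarrow> b \<in> carrier G \<Longrightarrow>
    eval_mono G A w a b
      = (if b = word_end G a w then \<Prod>i\<in>fst ` set w. edge_weight G A i (word_graph G a w i) else 0)"
proof (induction w arbitrary: a)
  case Nil
  then show ?case by (simp add: eval_mono_def gmat_one_def)
next
  case (Cons x w)
  let ?c = "word_step G a x" and ?e = "word_edge G a x" and ?i = "fst x" and ?g = "fst (snd x)"
  have g: "?g \<in> carrier G" and "?c \<in> carrier G"
    using Cons.prems word_step_closed by auto
  have "eval_mono G A (x # w) a b
      = (\<Sum>c\<in>carrier G. (if c = ?c then A ?i ?g (fst ?e) (snd ?e) else 0) * eval_mono G A w c b)"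
    using letter_matrix_entry[OF graded g Cons.prems(2)]
    by (simp add: eval_mono_Cons gmat_mult_def)
  also have "\<dots> = edge_weight G A ?i ?e * eval_mono G A w ?c b"
    using \<open>?c \<in> carrier G\<close> \<open>finite (carrier G)\<close> word_edge_label[OF Cons.prems(2) g]
    by (simp add: edge_weight_def if_distrib if_distribR cong: if_cong)
  moreover have "(\<Prod>i\<in>fst ` set w. edge_weight G A i (word_graph G a (x # w) i))
      = (\<Prod>i\<in>fst ` set w. edge_weight G A i (word_graph G ?c w i))"
    using Cons.prems(1) by (intro prod.cong) (auto simp: image_iff)
  ultimately show ?case
    using Cons \<open>?c \<in> carrier G\<close> by (simp add: prod.insert)
qed

lemma eval_mono_eq_signature_eval:
  assumes "\<And>i g. g \<in> carrier G \<Longrightarrow> A i g \<in> graded_comp G g" and "finite (carrier G)"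
    and "w \<in> mono_words G n" and "a \<in> carrier G" and "b \<in> carrier G"
  shows "eval_mono G A w a b = signature_eval G n A a b (word_signature G w)"
proof -
  have w: "wf_word G w" "fst ` set w = {1..n}"
    using mono_wordsD[OF assms(3)] by auto
  have "word_end G a w = a \<otimes> word_end G \<one> w"
    using word_end_translate[OF w(1) assms(4) one_closed] assms(4) by simp
  moreover have "(\<Prod>i\<in>{1..n}. edge_weight G A i (word_graph G a w i))
      = (\<Prod>i\<in>{1..n}. edge_weight G A i (map_prod ((\<otimes>) a) ((\<otimes>) a) (word_graph G \<one> w i)))"
    using word_graph_translate[OF w(1) assms(4) one_closed] assms(4) w(2) by (intro prod.cong) auto
  ultimately show ?thesis
    using eval_mono_eq_edge_product[OF assms(1,2) w(1) assms(4,5)] w(2)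
    by (simp add: signature_eval_def word_signature_def)
qed

text \<open>Matrix units placed on the edges of one signature detect exactly that signature.\<close>

lemma signature_eval_indicator:
  assumes "w0 \<in> mono_words G n" "w \<in> mono_words G n"
  defines "\<sigma>0 \<equiv> word_signature G w0"
  shows "signature_eval G n (\<lambda>i g u v. of_bool (fst \<sigma>0 i = (u, v) \<and> v = u \<otimes> g)) \<one> (snd \<sigma>0) (word_signature G w)
       = of_bool (word_signature G w = \<sigma>0)"
proof -
  have w0: "wf_word G w0" "fst ` set w0 = {1..n}" and w: "wf_word G w" "fst ` set w = {1..n}"
    using mono_wordsD[OF assms(1)] mono_wordsD[OF assms(2)] by auto
  define \<Gamma> where "\<Gamma> = word_graph G \<one> w"
  define \<Gamma>0 where "\<Gamma>0 = word_graph G \<one> w0"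
  have "edge_weight G (\<lambda>i g u v. of_bool (\<Gamma>0 i = (u, v) \<and> v = u \<otimes> g)) i (map_prod ((\<otimes>) \<one>) ((\<otimes>) \<one>) (\<Gamma> i))
      = of_bool (\<Gamma>0 i = \<Gamma> i)" if i: "i \<in> {1..n}" for i
  proof -
    obtain u v where uv: "\<Gamma> i = (u, v)" "u \<in> carrier G" "v \<in> carrier G"
      using word_graph_closed[OF w(1) one_closed, of i] i w(2) by (auto simp: \<Gamma>_def)
    then have "v = u \<otimes> (inv u \<otimes> v)"
      by (simp flip: m_assoc)
    then show ?thesis
      using uv by (simp add: edge_weight_def)
  qed
  then have "(\<Prod>i\<in>{1..n}. edge_weight G (\<lambda>i g u v. of_bool (\<Gamma>0 i = (u, v) \<and> v = u \<otimes> g)) i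
      (map_prod ((\<otimes>) \<one>) ((\<otimes>) \<one>) (\<Gamma> i))) = (of_bool (\<forall>i\<in>{1..n}. \<Gamma>0 i = \<Gamma> i) :: complex)"
    by (simp add: prod_of_bool)
  also have "(\<forall>i\<in>{1..n}. \<Gamma>0 i = \<Gamma> i) \<longleftrightarrow> \<Gamma> = \<Gamma>0"
    using word_graph_extensional[of G \<one> w] word_graph_extensional[of G \<one> w0] w(2) w0(2)
    by (auto simp: \<Gamma>_def \<Gamma>0_def intro: extensionalityI)
  finally show ?thesis
    using word_end_closed[OF w(1) one_closed]
    by (auto simp: signature_eval_def \<sigma>0_def word_signature_def \<Gamma>_def \<Gamma>0_def)
qed

lemma fibre_sum_eq_0_if_Pn_Id:
  assumes "finite (carrier G)" and "c \<in> Pn_Id G n" and "w0 \<in> mono_words G n"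
  shows "(\<Sum>w\<in>{w\<in>mono_words G n. word_signature G w = word_signature G w0}. c w) = 0"
proof -
  define \<sigma> where "\<sigma> = word_signature G w0"
  define A where "A = (\<lambda>i g u v. of_bool (fst \<sigma> i = (u, v) \<and> v = u \<otimes> g) :: complex)"
  have graded: "A i g \<in> graded_comp G g" for i g
    by (simp add: A_def graded_comp_def)
  have "snd \<sigma> \<in> carrier G"
    using word_end_closed[OF mono_wordsD(1)[OF assms(3)] one_closed] by (simp add: \<sigma>_def word_signature_def)
  then have "0 = (\<Sum>w\<in>mono_words G n. of_rat (c w) * eval_mono G A w \<one> (snd \<sigma>))"
    using assms(2) graded by (simp add: Pn_Id_def)
  also have "\<dots> = (\<Sum>w\<in>mono_words G n. of_rat (c w) * of_bool (word_signature G w = \<sigma>))"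
    using eval_mono_eq_signature_eval[OF graded assms(1) _ one_closed \<open>snd \<sigma> \<in> carrier G\<close>]
      signature_eval_indicator[OF assms(3)]
    by (intro sum.cong) (simp_all add: A_def \<sigma>_def)
  also have "\<dots> = of_rat (\<Sum>w\<in>{w\<in>mono_words G n. word_signature G w = \<sigma>}. c w)"
    using finite_mono_words[OF assms(1)] by (simp add: of_rat_sum Int_def)
  finally show ?thesis
    by (simp add: \<sigma>_def)
qed

lemma Pn_Id_if_fibre_sums_eq_0:
  assumes "finite (carrier G)" and "c \<in> supported_in (mono_words G n)"
    and "\<forall>\<sigma>\<in>word_signature G ` mono_words G n. (\<Sum>w\<in>{w\<in>mono_words G n. word_signature G w = \<sigma>}. c w) = 0"
  shows "c \<in> Pn_Id G n"
proof -
  have "(\<Sum>w\<in>mono_words G n. of_rat (c w) * eval_mono G A w a b) = 0"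
    if "\<forall>i g. g \<in> carrier G \<longrightarrow> A i g \<in> graded_comp G g" "a \<in> carrier G" "b \<in> carrier G" for A a b
  proof -
    have "(\<Sum>w\<in>mono_words G n. of_rat (c w) * eval_mono G A w a b)
        = (\<Sum>w\<in>mono_words G n. of_rat (c w) * signature_eval G n A a b (word_signature G w))"
      using eval_mono_eq_signature_eval[OF _ assms(1) _ that(2,3)] that(1) by (intro sum.cong) auto
    also have "\<dots> = 0"
      using assms(3) finite_mono_words[OF assms(1)] by (intro sum_eq_0_if_fibre_sums_eq_0) auto
    finally show ?thesis .
  qed
  then show "c \<in> Pn_Id G n"
    using assms(2) by (simp add: Pn_Id_def Pn_def supported_in_def)
qed

lemma Pn_Id_eq_fibre_sums_zero:
  assumes "finite (carrier G)"
  shows "Pn_Id G n = {c \<in> supported_in (mono_words G n). \<forall>\<sigma>\<in>word_signature G ` mono_words G n.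
           (\<Sum>w\<in>{w\<in>mono_words G n. word_signature G w = \<sigma>}. c w) = 0}"
  using fibre_sum_eq_0_if_Pn_Id[OF assms] Pn_Id_if_fibre_sums_eq_0[OF assms]
  by (auto simp: Pn_Id_def Pn_def supported_in_def)

lemma card_word_signatures:
  "card (word_signature G ` mono_words G n) = card (word_graph G \<one> ` mono_words G n)"
proof -
  have "inj_on fst (word_signature G ` mono_words G n)"
  proof (rule inj_onI)
    fix \<sigma>1 \<sigma>2 assume "\<sigma>1 \<in> word_signature G ` mono_words G n" "\<sigma>2 \<in> word_signature G ` mono_words G n"
      and "fst \<sigma>1 = fst \<sigma>2"
    then obtain w1 w2 where "w1 \<in> mono_words G n" "w2 \<in> mono_words G n"
      and "\<sigma>1 = word_signature G w1" "\<sigma>2 = word_signature G w2" "word_graph G \<one> w1 = word_graph G \<one> w2"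
      by (auto simp: word_signature_def)
    then show "\<sigma>1 = \<sigma>2"
      using word_end_eq_if_word_graph_eq[of w1 n w2] by (simp add: word_signature_def)
  qed
  then have "card (word_signature G ` mono_words G n) = card (fst ` word_signature G ` mono_words G n)"
    by (simp add: card_image)
  then show ?thesis
    by (simp add: image_image word_signature_def)
qed

end

theorem mainTheorem11:
  fixes G :: "('a, 'b) monoid_scheme" and k n :: nat
  assumes "group G" and "finite (carrier G)" and "card (carrier G) = k" and "k \<ge> 2"
    and "n \<ge> 1"
  shows "graded_codim G n = euler_graph_count (carrier G) \<one>\<^bsub>G\<^esub> n
       \<and> graded_codim G n = m_count k n"
proof -
  interpret group G by fact
  let ?W = "mono_words G n"
  have fin: "finite ?W"
    using finite_mono_words[OF assms(2)] .
  have "graded_codim G n = card ?W - (card ?W - card (word_signature G ` ?W))"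
    unfolding graded_codim_def Pn_Id_eq_fibre_sums_zero[OF assms(2)] Pn_eq_supported_in
    by (simp only: rat_fun_dim_supported_in[OF fin] rat_fun_dim_fibre_sums_zero[OF fin])
  also have "\<dots> = card (word_graph G \<one>\<^bsub>G\<^esub> ` ?W)"
    using card_image_le[OF fin, of "word_signature G"] by (simp add: card_word_signatures)
  also have "\<dots> = euler_graph_count (carrier G) \<one>\<^bsub>G\<^esub> n"
    by (simp add: word_graph_image euler_graph_count_def)
  finally have codim: "graded_codim G n = euler_graph_count (carrier G) \<one>\<^bsub>G\<^esub> n" .
  obtain h where "bij_betw h (carrier G) {0..<k}" "h \<one>\<^bsub>G\<^esub> = 0"
    using ex_bij_betw_finite_nat_zero[OF assms(2) one_closed] assms(3) by metis
  then have "euler_graph_count (carrier G) \<one>\<^bsub>G\<^esub> n = m_count k n"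
    unfolding m_count_def by (metis euler_graph_count_bij_betw one_closed)
  with codim show ?thesis by simp
qed

end
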